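(* Let $(P_n)_{n\in\mathbb{Z}}$ be the Padovan sequence. Let $a,b,m$ be integers with $1\le b\le a$, $m\ge 0$, and $n=am+b>a$. Then for every integer $k\ge 0$ there exist integers $c_1,c_2,c_3$ with $$P_n=c_1P_{a(k+2)+b}+c_2P_{a(k+1)+b}+c_3P_{ak+b};$$ in particular $P_n$ is an integer linear combination of $P_{2a+b}$, $P_{a+b}$ and $P_b$.
   Context: The Padovan sequence is defined by $P_0=P_1=P_2=1$ and $P_{n+3}=P_{n+1}+P_n$, extended to negative indices via $P_n=P_{n+3}-P_{n+1}$. The entries $P_b,P_{a+b},P_{2a+b},\dots$ form the $b$th column of the "$a$ columns Padovan table" (the array whose rows are $P_{ja+1},\dots,P_{ja+a}$, $j=0,1,2,\dots$). *)

theory Defs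
  imports Main
begin

fun pad_pos :: "nat \<Rightarrow> int" where
  "pad_pos 0 = 1"
| "pad_pos (Suc 0) = 1"
| "pad_pos (Suc (Suc 0)) = 1"
| "pad_pos (Suc (Suc (Suc n))) = pad_pos (Suc n) + pad_pos n"

text \<open>pad_neg j = P_(-j), obtained from P_n = P_(n+3) - P_(n+1):
  P_0 = 1, P_(-1) = P_2 - P_0 = 0, P_(-2) = P_1 - P_(-1) = 1,
  P_(-(j+3)) = P_(-j) - P_(-(j+2)).\<close>
fun pad_neg :: "nat \<Rightarrow> int" where
  "pad_neg 0 = 1"
| "pad_neg (Suc 0) = 0"
| "pad_neg (Suc (Suc 0)) = 1"
| "pad_neg (Suc (Suc (Suc j))) = pad_neg j - pad_neg (Suc (Suc j))"

definition padovan :: "int \<Rightarrow> int" where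
  "padovan n = (if n \<ge> 0 then pad_pos (nat n) else pad_neg (nat (- n)))"

end

theory Submission
  imports Defs
begin

(* The shift x \<mapsto> x + a acts on the triples (P x, P (x+1), P (x+2)) as the a-th power N of
   the companion matrix of the Padovan recurrence, and det N = 1. By Cayley-Hamilton every
   column P (a j + b) of the table therefore satisfies a third-order recurrence whose constant
   coefficient is det N = 1, so it can be run both forwards and backwards with integer
   coefficients: every entry of the column is an integer combination of any three consecutive
   ones. *)

lemma padovan_rec: "padovan (x + 3) = padovan (x + 1) + padovan x"
proof -
  consider "x \<ge> 0" | "x = -1" | "x = -2" | "x = -3" | "x \<le> -4" by linarith
  then show ?thesis
  proof cases
    case 1
    then have "nat (x + 3) = Suc (Suc (Suc (nat x)))" "nat (x + 1) = Suc (nat x)" by auto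
    with 1 show ?thesis by (simp add: padovan_def)
  next
    case 5
    define j where "j = nat (- x - 3)"
    have "nat (- x) = Suc (Suc (Suc j))" "nat (- (x + 3)) = j" "nat (- (x + 1)) = Suc (Suc j)"
      using 5 by (auto simp: j_def)
    with 5 show ?thesis by (simp add: padovan_def)
  qed (simp_all add: padovan_def numeral_eq_Suc)
qed

datatype 'a mat3 = Mat3 'a 'a 'a 'a 'a 'a 'a 'a 'a

fun mat3_apply :: "'a::comm_ring_1 mat3 \<Rightarrow> 'a \<times> 'a \<times> 'a \<Rightarrow> 'a \<times> 'a \<times> 'a" where
  "mat3_apply (Mat3 a b c d e f g h i) (x, y, z) =
    (a*x + b*y + c*z, d*x + e*y + f*z, g*x + h*y + i*z)"

fun mat3_mult :: "'a::comm_ring_1 mat3 \<Rightarrow> 'a mat3 \<Rightarrow> 'a mat3" where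
  "mat3_mult (Mat3 a b c d e f g h i) (Mat3 a' b' c' d' e' f' g' h' i') =
    Mat3 (a*a' + b*d' + c*g') (a*b' + b*e' + c*h') (a*c' + b*f' + c*i')
         (d*a' + e*d' + f*g') (d*b' + e*e' + f*h') (d*c' + e*f' + f*i')
         (g*a' + h*d' + i*g') (g*b' + h*e' + i*h') (g*c' + h*f' + i*i')"

definition mat3_one :: "'a::comm_ring_1 mat3" where
  "mat3_one = Mat3 1 0 0 0 1 0 0 0 1"

fun mat3_pow :: "'a::comm_ring_1 mat3 \<Rightarrow> nat \<Rightarrow> 'a mat3" where
  "mat3_pow A 0 = mat3_one"
| "mat3_pow A (Suc n) = mat3_mult (mat3_pow A n) A"

fun mat3_det :: "'a::comm_ring_1 mat3 \<Rightarrow> 'a" where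
  "mat3_det (Mat3 a b c d e f g h i) = a*(e*i - f*h) - b*(d*i - f*g) + c*(d*h - e*g)"

fun mat3_trace :: "'a::comm_ring_1 mat3 \<Rightarrow> 'a" where
  "mat3_trace (Mat3 a b c d e f g h i) = a + e + i"

fun mat3_principal_minors :: "'a::comm_ring_1 mat3 \<Rightarrow> 'a" where
  "mat3_principal_minors (Mat3 a b c d e f g h i) = (a*e - b*d) + (a*i - c*g) + (e*i - f*h)"

lemma mat3_apply_mult: "mat3_apply (mat3_mult A B) v = mat3_apply A (mat3_apply B v)"
  by (cases A; cases B; cases v) (simp add: algebra_simps)

lemma mat3_det_mult: "mat3_det (mat3_mult A B) = mat3_det A * mat3_det B"
  by (cases A; cases B) (simp add: algebra_simps)

lemma mat3_apply_pow:
  assumes "\<And>v. mat3_apply A (f v) = f (g v)"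
  shows "mat3_apply (mat3_pow A n) (f v) = f ((g ^^ n) v)"
proof (induction n arbitrary: v)
  case 0
  show ?case by (cases "f v") (simp add: mat3_one_def)
next
  case (Suc n)
  show ?case by (simp add: mat3_apply_mult assms Suc funpow_swap1)
qed

lemma mat3_det_pow: "mat3_det (mat3_pow A n) = mat3_det A ^ n"
  by (induction n) (simp_all add: mat3_det_mult mat3_one_def)

lemma mat3_cayley_hamilton_fst:
  "fst (mat3_apply N (mat3_apply N (mat3_apply N v))) =
     mat3_trace N * fst (mat3_apply N (mat3_apply N v))
     - mat3_principal_minors N * fst (mat3_apply N v) + mat3_det N * fst v"
  by (cases N; cases v) (simp add: algebra_simps)

definition padovan_triple :: "int \<Rightarrow> int \<times> int \<times> int" where
  "padovan_triple x = (padovan x, padovan (x + 1), padovan (x + 2))"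

definition padovan_companion :: "int mat3" where
  "padovan_companion = Mat3 0 1 0 0 0 1 1 1 0"

lemma padovan_companion_apply:
  "mat3_apply padovan_companion (padovan_triple x) = padovan_triple (x + 1)"
  using padovan_rec[of x] by (simp add: padovan_companion_def padovan_triple_def add.assoc)

lemma padovan_companion_pow_apply:
  "mat3_apply (mat3_pow padovan_companion n) (padovan_triple x) = padovan_triple (x + int n)"
proof -
  have "((\<lambda>y. y + 1) ^^ n) x = x + int n"
    by (induction n) simp_all
  then show ?thesis
    using mat3_apply_pow[of padovan_companion padovan_triple "\<lambda>y. y + 1"]
    by (simp add: padovan_companion_apply)
qed

lemma padovan_column_rec:
  assumes "a \<ge> 0"
  obtains s t where
    "\<And>x. padovan (x + 3 * a) = s * padovan (x + 2 * a) + t * padovan (x + a) + padovan x"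
proof -
  define N where "N = mat3_pow padovan_companion (nat a)"
  have shift: "mat3_apply N (padovan_triple x) = padovan_triple (x + a)" for x
    using assms by (simp add: N_def padovan_companion_pow_apply)
  have det: "mat3_det N = 1"
    by (simp add: N_def mat3_det_pow padovan_companion_def)
  have "padovan (x + 3 * a) = mat3_trace N * padovan (x + 2 * a)
      + (- mat3_principal_minors N) * padovan (x + a) + padovan x" for x
  proof -
    have "x + a + a = x + 2 * a" "x + 2 * a + a = x + 3 * a" by simp_all
    then have "fst (padovan_triple (x + 3 * a)) = mat3_trace N * fst (padovan_triple (x + 2 * a))
        - mat3_principal_minors N * fst (padovan_triple (x + a)) + fst (padovan_triple x)"
      using mat3_cayley_hamilton_fst[of N "padovan_triple x"] det
      by (simp only: shift mult_1)
    then show ?thesis by (simp add: padovan_triple_def)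
  qed
  then show ?thesis by (rule that)
qed

definition span3 :: "'a::comm_ring_1 \<Rightarrow> 'a \<Rightarrow> 'a \<Rightarrow> 'a set" where
  "span3 x y z = {c1 * x + c2 * y + c3 * z | c1 c2 c3. True}"

lemma span3_generators: "x \<in> span3 x y z" "y \<in> span3 x y z" "z \<in> span3 x y z"
  unfolding span3_def
  by (force intro: exI[of _ 0] exI[of _ 1])+

lemma span3_lincomb:
  assumes "p \<in> span3 x y z" "q \<in> span3 x y z" "r \<in> span3 x y z"
  shows "u * p + v * q + w * r \<in> span3 x y z"
proof -
  from assms obtain a1 a2 a3 b1 b2 b3 d1 d2 d3 where
    "p = a1 * x + a2 * y + a3 * z" "q = b1 * x + b2 * y + b3 * z" "r = d1 * x + d2 * y + d3 * z"
    unfolding span3_def by auto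
  then have "u * p + v * q + w * r =
      (u*a1 + v*b1 + w*d1) * x + (u*a2 + v*b2 + w*d2) * y + (u*a3 + v*b3 + w*d3) * z"
    by (simp add: algebra_simps)
  then show ?thesis unfolding span3_def by blast
qed

lemma unimodular_rec3_in_span3:
  fixes Q :: "int \<Rightarrow> 'a::comm_ring_1"
  assumes rec: "\<And>j. Q (j + 3) = s * Q (j + 2) + t * Q (j + 1) + Q j"
  shows "Q m \<in> span3 (Q (k + 2)) (Q (k + 1)) (Q k)"
proof -
  let ?S = "span3 (Q (k + 2)) (Q (k + 1)) (Q k)"
  have "Q j \<in> ?S \<and> Q (j + 1) \<in> ?S \<and> Q (j + 2) \<in> ?S" for j
  proof (induction j rule: int_induct[where k = k])
    case base
    show ?case using span3_generators by blast
  next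
    case (step1 i)
    then have "s * Q (i + 2) + t * Q (i + 1) + 1 * Q i \<in> ?S"
      by (blast intro: span3_lincomb)
    with step1 rec[of i] show ?case by (simp add: add.assoc)
  next
    case (step2 i)
    have "Q (i - 1) = 1 * Q (i + 2) + (- s) * Q (i + 1) + (- t) * Q i"
      using rec[of "i - 1"] by (simp add: algebra_simps)
    with step2 have "Q (i - 1) \<in> ?S"
      by (metis span3_lincomb)
    with step2 show ?case by (simp add: add.commute)
  qed
  then show ?thesis by blast
qed

theorem theorem3p4:
  fixes a b m n :: int
  assumes "1 \<le> b" and "b \<le> a" and "0 \<le> m" and "n = a * m + b" and "n > a"
  shows "(\<forall>k::int. k \<ge> 0 \<longrightarrow>
            (\<exists>c1 c2 c3 :: int. padovan n = c1 * padovan (a * (k + 2) + b)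
                                  + c2 * padovan (a * (k + 1) + b) + c3 * padovan (a * k + b)))
         \<and> (\<exists>c1 c2 c3 :: int. padovan n = c1 * padovan (2 * a + b)
                                  + c2 * padovan (a + b) + c3 * padovan b)"
proof -
  obtain s t where st:
    "\<And>x. padovan (x + 3 * a) = s * padovan (x + 2 * a) + t * padovan (x + a) + padovan x"
    using padovan_column_rec[of a] assms(1,2) by auto
  define Q where "Q j = padovan (a * j + b)" for j
  have "Q (j + 3) = s * Q (j + 2) + t * Q (j + 1) + Q j" for j
    using st[of "a * j + b"] by (simp add: Q_def algebra_simps)
  then have column: "\<exists>c1 c2 c3. padovan n = c1 * padovan (a * (k + 2) + b)
      + c2 * padovan (a * (k + 1) + b) + c3 * padovan (a * k + b)" for k
    using unimodular_rec3_in_span3[of Q s t m k] assms(4) by (simp add: Q_def span3_def)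
  from column[of 0] have "\<exists>c1 c2 c3. padovan n = c1 * padovan (2 * a + b)
      + c2 * padovan (a + b) + c3 * padovan b"
    by (simp add: mult.commute)
  with column show ?thesis by blast
qed

end
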